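(* Let $X$ be a binary $N\times t$ matrix that is 3-good, let $S\subseteq[t]$ with $|S|=3$, let $\mathbf{y}=r(X,S)$ and $H=H(X,3,\mathbf{y})=([t],E)$. Let $L_1=\log_2\log_2 t$, $L_2=3L_1$, and let $G'=([t],E')$ be the graph in which distinct vertices $v_1,v_2$ are adjacent iff there are at least $L_2$ hyperedges $e\in E$ with $v_1\in e$ and $v_2\in e$. Then every vertex of $G'$ has degree less than $L_1$.
   Context: For a binary $N\times t$ matrix $X$ with columns $x(1),\dots,x(t)$ and $S\subseteq[t]$, $r(X,S)=\bigvee_{j\in S}x(j)$ (coordinatewise Boolean OR). For $\mathbf{y}\in\{0,1\}^N$, $H(X,3,\mathbf{y})$ is the $3$-uniform hypergraph on $[t]$ whose hyperedges are all $3$-element $S\subseteq[t]$ with $r(X,S)=\mathbf{y}$. A $(3,k)$ configuration of size $L$ is a set of $L$ hyperedges $e_1,\dots,e_L$ with a set $U$, $|U|=k$, such that $e_i\cap e_j=U$ for all $i\ne j$. Fix $p\in(0,1)$; $\Pr_1(s,w)$ is the probability that the OR of $s$ independent uniformly random length-$N$ binary columns of weight $\lfloor pN\rfloor$ equals a fixed vector of weight $w$; $\Pr_2(s,w_1,w)$ is the probability that the OR of $s$ such columns together with a fixed column $\mathbf{y}_1$ of weight $w_1$ equals a fixed vector $\mathbf{y}$ of weight $w$ with $\mathbf{y}\vee\mathbf{y}_1=\mathbf{y}$. With $L_1=\log_2\log_2 t$, $X$ is 3-good if: (1) for every $\mathbf{y}$, $H(X,3,\mathbf{y})$ has no $(3,1)$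 configuration of size $L_1$; (2) for every $\mathbf{y}$ with $|\mathbf{y}|=w$, $H(X,3,\mathbf{y})$ has no $(3,0)$ configuration of size $10\max(t^3\Pr_1(3,w),N)$; (3) for all $\mathbf{y},\mathbf{y}_1$ with $\mathbf{y}\vee\mathbf{y}_1=\mathbf{y}$, $|\mathbf{y}_1|=w_1$, $|\mathbf{y}|=w$, the number of $j$ with $\mathbf{y}_1\vee x(j)=\mathbf{y}$ is less than $10B(N,t)$, where $B(N,t)=t\Pr_2(1,w_1,w)$ if this exceeds $N$, $B(N,t)=N$ if $t^{-1/\sqrt{L_1}}\le t\Pr_2(1,w_1,w)\le N$, and $B(N,t)=L_1/10$ if $t\Pr_2(1,w_1,w)<t^{-1/\sqrt{L_1}}$; (4) for every $\mathbf{y}$ with $|\mathbf{y}|=w$ and integer $w_1\le w$, the number of pairwise disjoint pairs $\{j_1,j_2\}\subseteq[t]$ with $x(j_1)\vee x(j_2)\vee\mathbf{y}=\mathbf{y}$ and $|x(j_1)\vee x(j_2)|=w_1$ is less than $10\max(N,\binom{w}{w_1}t^2\Pr_1(2,w_1))$. *)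

theory Defs
  imports Complex_Main "HOL-Library.FuncSet"
begin

text \<open>A binary N x t matrix X is represented by its columns: X j is the support
(set of rows with entry 1) of column j, a subset of {0..<N}, for j < t.
Binary vectors of length N are subsets of {0..<N}; Boolean OR is union,
weight is card.  The column index set [t] is rendered as {0..<t}.\<close>

definition rOR :: "(nat \<Rightarrow> nat set) \<Rightarrow> nat set \<Rightarrow> nat set" where
  "rOR X S = (\<Union>j\<in>S. X j)"

definition hyperedges :: "(nat \<Rightarrow> nat set) \<Rightarrow> nat \<Rightarrow> nat set \<Rightarrow> nat set set" where
  "hyperedges X t y = {S. S \<subseteq> {0..<t} \<and> card S = 3 \<and> rOR X S = y}"

definition is_config :: "nat set set \<Rightarrow> nat \<Rightarrow> nat set set \<Rightarrow> bool" where
  "is_config E k F \<longleftrightarrow> F \<subseteq> E \<and> finite F \<and>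
     (\<exists>U. card U = k \<and> (\<forall>e\<in>F. U \<subseteq> e) \<and>
          (\<forall>e\<in>F. \<forall>e'\<in>F. e \<noteq> e' \<longrightarrow> e \<inter> e' = U))"

definition colw :: "real \<Rightarrow> nat \<Rightarrow> nat" where
  "colw p N = nat \<lfloor>p * real N\<rfloor>"

text \<open>Pr_1(s,w): probability that the OR of s independent uniform weight-colw columns
equals the fixed vector {0..<w} of weight w.\<close>
definition Pr1 :: "real \<Rightarrow> nat \<Rightarrow> nat \<Rightarrow> nat \<Rightarrow> real" where
  "Pr1 p N s w =
     real (card {f \<in> {0..<s} \<rightarrow>\<^sub>E {A. A \<subseteq> {0..<N} \<and> card A = colw p N}.
                   (\<Union>i\<in>{0..<s}. f i) = {0..<w}})
     / real (N choose colw p N) ^ s"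

text \<open>Pr_2(s,w1,w): same, with the fixed column y1 = {0..<w1} (weight w1) added,
target y = {0..<w} (weight w).\<close>
definition Pr2 :: "real \<Rightarrow> nat \<Rightarrow> nat \<Rightarrow> nat \<Rightarrow> nat \<Rightarrow> real" where
  "Pr2 p N s w1 w =
     real (card {f \<in> {0..<s} \<rightarrow>\<^sub>E {A. A \<subseteq> {0..<N} \<and> card A = colw p N}.
                   {0..<w1} \<union> (\<Union>i\<in>{0..<s}. f i) = {0..<w}})
     / real (N choose colw p N) ^ s"

definition L1 :: "nat \<Rightarrow> real" where
  "L1 t = log 2 (log 2 (real t))"

definition Bfun :: "real \<Rightarrow> nat \<Rightarrow> nat \<Rightarrow> nat \<Rightarrow> nat \<Rightarrow> real" where
  "Bfun p N t w1 w =
     (let v = real t * Pr2 p N 1 w1 w in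
      if v > real N then v
      else if real t powr (- 1 / sqrt (L1 t)) \<le> v then real N
      else L1 t / 10)"

definition good3 :: "real \<Rightarrow> nat \<Rightarrow> nat \<Rightarrow> (nat \<Rightarrow> nat set) \<Rightarrow> bool" where
  "good3 p N t X \<longleftrightarrow>
    (\<forall>y. y \<subseteq> {0..<N} \<longrightarrow>
        \<not> (\<exists>F. is_config (hyperedges X t y) 1 F \<and> real (card F) \<ge> L1 t)) \<and>
    (\<forall>y. y \<subseteq> {0..<N} \<longrightarrow>
        \<not> (\<exists>F. is_config (hyperedges X t y) 0 F \<and>
              real (card F) \<ge> 10 * max (real t ^ 3 * Pr1 p N 3 (card y)) (real N))) \<and>
    (\<forall>y y1. y \<subseteq> {0..<N} \<longrightarrow> y1 \<subseteq> {0..<N} \<longrightarrow> y \<union> y1 = y \<longrightarrow>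
        real (card {j \<in> {0..<t}. y1 \<union> X j = y}) < 10 * Bfun p N t (card y1) (card y)) \<and>
    (\<forall>y w1 P. y \<subseteq> {0..<N} \<longrightarrow> w1 \<le> card y \<longrightarrow>
        P \<subseteq> {{j1, j2} | j1 j2. j1 < t \<and> j2 < t \<and> j1 \<noteq> j2 \<and>
                 X j1 \<union> X j2 \<union> y = y \<and> card (X j1 \<union> X j2) = w1} \<longrightarrow>
        (\<forall>a\<in>P. \<forall>b\<in>P. a \<noteq> b \<longrightarrow> a \<inter> b = {}) \<longrightarrow>
        real (card P) < 10 * max (real N)
            (real (card y choose w1) * real t ^ 2 * Pr1 p N 2 w1))"

end

theory Submission
  imports Defs
begin

text \<open>Suppose some vertex v had at least L1 neighbours in G' and pick m = \<lceil>L1\<rceil> of them,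
u_1, ..., u_m. Choose hyperedges e_i \<ni> v, u_i one after the other, each avoiding every vertex
other than v used so far and every other u_j. In a 3-uniform hypergraph a hyperedge through
v and u_i is determined by its third vertex, so each forbidden vertex excludes at most one
candidate; there are at most 3(m - 1) < L2 forbidden vertices, so the choice is always
possible. The e_i form a (3,1) configuration with kernel {v} of size m \<ge> L1, which
3-goodness rules out.\<close>

definition sunflower :: "'a set \<Rightarrow> 'a set set \<Rightarrow> bool" where
  "sunflower K F \<longleftrightarrow> (\<forall>e\<in>F. K \<subseteq> e) \<and> (\<forall>e\<in>F. \<forall>e'\<in>F. e \<noteq> e' \<longrightarrow> e \<inter> e' = K)"

lemma sunflower_empty [simp]: "sunflower K {}"
  by (simp add: sunflower_def)

lemma sunflower_insert:
  assumes "sunflower K F" "K \<subseteq> e" "e \<inter> \<Union>F \<subseteq> K"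
  shows "sunflower K (insert e F)"
  using assms unfolding sunflower_def by blast

lemma is_config_singleton_kernel:
  assumes "F \<subseteq> E" "finite F" "sunflower {v} F"
  shows "is_config E 1 F"
  using assms unfolding is_config_def sunflower_def by (intro conjI exI[of _ "{v}"]) auto

lemma card_uniform_edges_containing_le_1:
  assumes "\<forall>e\<in>E. card e = 3" "card {a, b, c} = 3"
  shows "card {e\<in>E. {a, b, c} \<subseteq> e} \<le> 1"
proof -
  have "{e\<in>E. {a, b, c} \<subseteq> e} \<subseteq> {{a, b, c}}"
  proof
    fix e assume e: "e \<in> {e\<in>E. {a, b, c} \<subseteq> e}"
    then have "card e = 3" "finite e"
      using assms(1) by (auto intro: card_ge_0_finite)
    with e assms(2) have "e = {a, b, c}"
      by (metis (no_types, lifting) card_subset_eq mem_Collect_eq)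
    then show "e \<in> {{a, b, c}}" by simp
  qed
  then have "card {e\<in>E. {a, b, c} \<subseteq> e} \<le> card {{a, b, c}}"
    by (intro card_mono) auto
  then show ?thesis by simp
qed

lemma uniform_edge_avoiding:
  assumes "finite E" "\<forall>e\<in>E. card e = 3" "a \<noteq> b"
    and "finite Z" "a \<notin> Z" "b \<notin> Z"
    and "card Z < card {e\<in>E. a \<in> e \<and> b \<in> e}"
  shows "\<exists>e\<in>E. a \<in> e \<and> b \<in> e \<and> e \<inter> Z = {}"
proof (rule ccontr)
  assume "\<not> ?thesis"
  then have "{e\<in>E. a \<in> e \<and> b \<in> e} \<subseteq> (\<Union>z\<in>Z. {e\<in>E. {a, b, z} \<subseteq> e})"
    by blast
  then have "card {e\<in>E. a \<in> e \<and> b \<in> e} \<le> card (\<Union>z\<in>Z. {e\<in>E. {a, b, z} \<subseteq> e})"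
    using assms(1,4) by (intro card_mono) auto
  also have "\<dots> \<le> (\<Sum>z\<in>Z. card {e\<in>E. {a, b, z} \<subseteq> e})"
    using assms(4) by (rule card_UN_le)
  also have "\<dots> \<le> (\<Sum>z\<in>Z. 1)"
  proof (rule sum_mono)
    fix z assume "z \<in> Z"
    then have "z \<noteq> a" "z \<noteq> b" using assms(5,6) by auto
    then have "card {a, b, z} = 3" using assms(3) by simp
    then show "card {e\<in>E. {a, b, z} \<subseteq> e} \<le> 1"
      by (rule card_uniform_edges_containing_le_1[OF assms(2)])
  qed
  finally show False using assms(7) by simp
qed

lemma card_Union_uniform_minus_kernel:
  assumes "finite F" "\<forall>e\<in>F. card e = 3" "\<forall>e\<in>F. v \<in> e"
  shows "card (\<Union>F - {v}) \<le> 2 * card F"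
proof -
  have "\<Union>F - {v} = (\<Union>e\<in>F. e - {v})" by blast
  then have "card (\<Union>F - {v}) = card (\<Union>e\<in>F. e - {v})" by (rule arg_cong)
  also have "\<dots> \<le> (\<Sum>e\<in>F. card (e - {v}))" by (rule card_UN_le[OF assms(1)])
  also have "\<dots> = (\<Sum>e\<in>F. 2)"
    using assms(2,3) by (intro sum.cong) (auto simp: card_ge_0_finite)
  finally show ?thesis by simp
qed

text \<open>Greedy construction; the invariant that the petals meet M only inside M' keeps the
vertices of M - M' available for later steps.\<close>

lemma sunflower_of_large_codegrees:
  assumes E: "finite E" "\<forall>e\<in>E. card e = 3"
    and M: "finite M" "v \<notin> M"
    and codeg: "\<forall>u\<in>M. 3 * (card M - 1) < card {e\<in>E. v \<in> e \<and> u \<in> e}"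
  shows "\<exists>F\<subseteq>E. card F = card M \<and> sunflower {v} F"
proof -
  have "\<exists>F\<subseteq>E. card F = card M' \<and> sunflower {v} F \<and> \<Union>F \<inter> M \<subseteq> M'" if "M' \<subseteq> M" for M'
    using finite_subset[OF that M(1)] that
  proof (induction M' rule: finite_subset_induct')
    case empty
    show ?case by auto
  next
    case (insert u M')
    then obtain F where F: "F \<subseteq> E" "card F = card M'" "sunflower {v} F" "\<Union>F \<inter> M \<subseteq> M'"
      by blast
    have finF: "finite F" using F(1) E(1) finite_subset by blast
    have u_notin: "u \<notin> \<Union>F" using F(4) insert.hyps(2,4) by blast
    have uv: "v \<noteq> u" using M(2) insert.hyps(2) by blast
    have finUF: "finite (\<Union>F)"
      using finF F(1) E(2) by (metis card.infinite finite_Union subsetD zero_neq_numeral)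
    define Z where "Z = (\<Union>F \<union> M) - {u, v}"
    have finZ: "finite Z" unfolding Z_def using finUF M(1) by blast
    have "Z \<subseteq> (\<Union>F - {v}) \<union> (M - {u})" unfolding Z_def by blast
    then have "card Z \<le> card ((\<Union>F - {v}) \<union> (M - {u}))"
      using finUF M(1) by (intro card_mono) auto
    also have "\<dots> \<le> card (\<Union>F - {v}) + card (M - {u})" by (rule card_Un_le)
    also have "card (\<Union>F - {v}) \<le> 2 * card F"
      using finF F(1,3) E(2) by (intro card_Union_uniform_minus_kernel) (auto simp: sunflower_def)
    also have "M' \<subset> M" using insert.hyps(2-4) by blast
    then have "card F < card M" using F(2) M(1) by (simp add: psubset_card_mono)
    then have "2 * card F + card (M - {u}) \<le> 3 * (card M - 1)"
      using insert.hyps(2) M(1) by simp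
    also have "\<dots> < card {e\<in>E. v \<in> e \<and> u \<in> e}" using codeg insert.hyps(2) by blast
    finally have "card Z < card {e\<in>E. v \<in> e \<and> u \<in> e}" by simp
    moreover have "v \<notin> Z" "u \<notin> Z" by (auto simp: Z_def)
    ultimately obtain e where e: "e \<in> E" "v \<in> e" "u \<in> e" "e \<inter> Z = {}"
      using uniform_edge_avoiding[OF E uv finZ] by blast
    have "e \<inter> \<Union>F \<subseteq> {v}" using e(4) u_notin by (auto simp: Z_def)
    have "e \<inter> M \<subseteq> {u}" using e(4) M(2) by (auto simp: Z_def)
    have "sunflower {v} (insert e F)"
      using F(3) e(2) \<open>e \<inter> \<Union>F \<subseteq> {v}\<close> by (intro sunflower_insert) auto
    moreover have "card (insert e F) = card (insert u M')"
      using F(2) finF insert.hyps(1,4) e(3) u_notin by auto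
    moreover have "\<Union>(insert e F) \<inter> M \<subseteq> insert u M'"
      using F(4) \<open>e \<inter> M \<subseteq> {u}\<close> by blast
    moreover have "insert e F \<subseteq> E" using F(1) e(1) by blast
    ultimately show ?case by (intro exI[of _ "insert e F"]) blast
  qed
  then show ?thesis by blast
qed

lemma good3_card_config1_less:
  assumes "good3 p N t X" "y \<subseteq> {0..<N}" "is_config (hyperedges X t y) 1 F"
  shows "real (card F) < L1 t"
proof -
  have "\<forall>y. y \<subseteq> {0..<N} \<longrightarrow>
      \<not> (\<exists>F. is_config (hyperedges X t y) 1 F \<and> real (card F) \<ge> L1 t)"
    using assms(1) unfolding good3_def by (rule conjunct1)
  then show ?thesis using assms(2,3) by (meson not_le)
qed

lemma card_high_codegree_less:
  fixes E :: "'a set set" and L :: real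
  assumes E: "finite E" "\<forall>e\<in>E. card e = 3"
    and small: "\<And>F. F \<subseteq> E \<Longrightarrow> sunflower {v} F \<Longrightarrow> real (card F) < L"
  shows "real (card {u\<in>V. u \<noteq> v \<and> 3 * L \<le> real (card {e\<in>E. v \<in> e \<and> u \<in> e})}) < L"
    (is "real (card ?Nb) < L")
proof (rule ccontr)
  assume "\<not> ?thesis"
  then have "nat \<lceil>L\<rceil> \<le> card ?Nb" by linarith
  then obtain M where M: "M \<subseteq> ?Nb" "card M = nat \<lceil>L\<rceil>" "finite M"
    by (rule obtain_subset_with_card_n)
  have "\<forall>u\<in>M. 3 * (card M - 1) < card {e\<in>E. v \<in> e \<and> u \<in> e}"
  proof
    fix u assume "u \<in> M"
    then have "card M \<noteq> 0" using M(3) by auto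
    then have "real (card M) = of_int \<lceil>L\<rceil>" using M(2) by simp
    then have "real (card M) - 1 < L" using ceiling_correct[of L] by simp
    then have "real (3 * (card M - 1)) < 3 * L" using \<open>card M \<noteq> 0\<close> by (simp add: of_nat_diff)
    also have "\<dots> \<le> card {e\<in>E. v \<in> e \<and> u \<in> e}" using \<open>u \<in> M\<close> M(1) by blast
    finally show "3 * (card M - 1) < card {e\<in>E. v \<in> e \<and> u \<in> e}" by linarith
  qed
  moreover have "v \<notin> M" using M(1) by blast
  ultimately obtain F where "F \<subseteq> E" "card F = card M" "sunflower {v} F"
    using sunflower_of_large_codegrees[OF E M(3)] by blast
  then have "real (card M) < L" using small by metis
  then show False using M(2) by linarith
qed

theorem lemma3:
  fixes p :: real and N t :: nat and X :: "nat \<Rightarrow> nat set" and S :: "nat set"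
  assumes "0 < p" "p < 1"
    and "\<forall>j<t. X j \<subseteq> {0..<N}"
    and "good3 p N t X"
    and "S \<subseteq> {0..<t}" "card S = 3"
  shows "\<forall>v1\<in>{0..<t}.
           real (card {v2 \<in> {0..<t}. v2 \<noteq> v1 \<and>
              real (card {e \<in> hyperedges X t (rOR X S). v1 \<in> e \<and> v2 \<in> e}) \<ge> 3 * L1 t})
           < L1 t"
proof
  fix v
  define E where "E = hyperedges X t (rOR X S)"
  have finE: "finite E" unfolding E_def hyperedges_def
    by (rule finite_subset[of _ "Pow {0..<t}"]) auto
  have E3: "\<forall>e\<in>E. card e = 3" unfolding E_def hyperedges_def by auto
  have y: "rOR X S \<subseteq> {0..<N}"
    unfolding rOR_def using assms(3,5) by (intro UN_least) (meson atLeastLessThan_iff subsetD)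
  have "real (card F) < L1 t" if "F \<subseteq> E" "sunflower {v} F" for F
  proof -
    have "is_config E 1 F"
      using that finE finite_subset by (blast intro: is_config_singleton_kernel)
    then show ?thesis unfolding E_def by (rule good3_card_config1_less[OF assms(4) y])
  qed
  from card_high_codegree_less[OF finE E3 this, where V = "{0..<t}"]
  show "real (card {u \<in> {0..<t}. u \<noteq> v \<and>
          real (card {e \<in> hyperedges X t (rOR X S). v \<in> e \<and> u \<in> e}) \<ge> 3 * L1 t}) < L1 t"
    unfolding E_def .
qed

end
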